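(* Let $P(t)$ and $Q(t)$ be real polynomials of degree at most $2$, and let $I\subset\mathbb{R}$ be an interval such that $P>0$ and $Q>0$ on $I$. Suppose $\Delta_P>0$ and that there is a constant $T>0$ such that (i) $\Delta_Q\ge T^{3/2}\Delta_P$, and (ii) $TP(t)\ge Q(t)$ for all $t\in I$. Then $G(t)=\sqrt{P(t)}-\sqrt{Q(t)}$ is convex on $I$.
   Context: For a real polynomial written as $R(t)=\alpha+2\beta t+\gamma t^2$ (where $\gamma=0$ is allowed), its discriminant is defined as $\Delta_R=\beta^2-\alpha\gamma$. *)

theory Defs
  imports "HOL-Analysis.Analysis" "HOL-Computational_Algebra.Polynomial"
begin

text \<open>For R(t) = alpha + 2 beta t + gamma t^2 (degree at most 2), the discriminant is
  beta^2 - alpha gamma, i.e. with alpha = coeff R 0, beta = coeff R 1 / 2, gamma = coeff R 2.\<close>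
definition discr :: "real poly \<Rightarrow> real" where
  "discr R = (coeff R 1 / 2)^2 - coeff R 0 * coeff R 2"

end

theory Submission
  imports Defs
begin

text \<open>For a quadratic R > 0 one has R'^2 - 2 R R'' = 4 discr R, so the second derivative of
  sqrt R is - discr R / R^(3/2). Hence G'' = discr Q / Q^(3/2) - discr P / P^(3/2), which is
  nonnegative because Q^(3/2) \<le> T^(3/2) P^(3/2) and discr Q \<ge> T^(3/2) discr P \<ge> 0.\<close>

lemma degree_le_2_eq_pCons_coeffs:
  fixes R :: "'a::comm_ring_1 poly"
  assumes "degree R \<le> 2"
  shows "R = [:coeff R 0, coeff R 1, coeff R 2:]"
proof (rule poly_eqI)
  fix n show "coeff R n = coeff [:coeff R 0, coeff R 1, coeff R 2:] n"
    using assms by (auto simp: coeff_pCons coeff_eq_0 numeral_2_eq_2 split: nat.split)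
qed

lemma has_real_derivative_sqrt_poly:
  assumes "poly R t > 0"
  shows "((\<lambda>t. sqrt (poly R t)) has_real_derivative poly (pderiv R) t / (2 * sqrt (poly R t))) (at t)"
  using assms by (auto intro!: derivative_eq_intros simp: divide_simps)

lemma pderiv_square_minus_eq_4_discr:
  assumes "degree R \<le> 2"
  shows "(poly (pderiv R) t)^2 - 2 * poly R t * poly (pderiv (pderiv R)) t = 4 * discr R"
proof -
  obtain a b c where "R = [:a, b, c:]"
    using degree_le_2_eq_pCons_coeffs[OF assms] by blast
  then show ?thesis
    by (simp add: discr_def pderiv_pCons numeral_2_eq_2 algebra_simps power2_eq_square)
qed

lemma has_real_derivative_pderiv_div_sqrt_poly:
  assumes "degree R \<le> 2" and "poly R t > 0"
  shows "((\<lambda>t. poly (pderiv R) t / (2 * sqrt (poly R t))) has_real_derivative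
    - discr R / poly R t powr (3/2)) (at t)"
proof -
  let ?r = "poly R t" and ?r' = "poly (pderiv R) t" and ?r'' = "poly (pderiv (pderiv R)) t"
  have "((\<lambda>t. poly (pderiv R) t / (2 * sqrt (poly R t))) has_real_derivative
      (?r'' * (2 * sqrt ?r) - 2 * (?r' / (2 * sqrt ?r)) * ?r') / (2 * sqrt ?r)^2) (at t)"
    unfolding numeral_2_eq_2 using assms(2)
    by (intro DERIV_quotient[OF poly_DERIV DERIV_cmult[OF has_real_derivative_sqrt_poly]]) simp_all
  also have "(?r'' * (2 * sqrt ?r) - 2 * (?r' / (2 * sqrt ?r)) * ?r') / (2 * sqrt ?r)^2
      = - (?r'^2 - 2 * ?r * ?r'') / (4 * (?r * sqrt ?r))"
    using assms(2) by (simp add: field_simps power2_eq_square)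
  also have "?r * sqrt ?r = ?r powr (3/2)"
    using assms(2) powr_add[of ?r 1 "1/2"] by (simp add: powr_half_sqrt)
  finally show ?thesis by (simp add: pderiv_square_minus_eq_4_discr[OF assms(1)])
qed

lemma divide_powr_three_halves_mono:
  fixes D E p q T :: real
  assumes "D \<ge> 0" "T > 0" "E \<ge> T powr (3/2) * D" "q > 0" "q \<le> T * p"
  shows "D / p powr (3/2) \<le> E / q powr (3/2)"
proof -
  have "E \<ge> 0"
    using assms(1,3) mult_nonneg_nonneg[OF powr_ge_zero[of T "3/2"] assms(1)] by linarith
  have "p > 0" using assms by (smt (verit) zero_less_mult_pos)
  have "D / p powr (3/2) = T powr (3/2) * D / (T * p) powr (3/2)"
    using assms(2) \<open>p > 0\<close> by (simp add: powr_mult)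
  also have "\<dots> \<le> E / (T * p) powr (3/2)"
    by (intro divide_right_mono assms(3)) simp
  also have "\<dots> \<le> E / q powr (3/2)"
    using assms \<open>E \<ge> 0\<close> by (intro divide_left_mono powr_mono2 mult_pos_pos) auto
  finally show ?thesis .
qed

theorem lemma7:
  fixes P Q :: "real poly" and I :: "real set" and T :: real
  assumes "degree P \<le> 2" and "degree Q \<le> 2"
    and "is_interval I"
    and "\<forall>t\<in>I. poly P t > 0" and "\<forall>t\<in>I. poly Q t > 0"
    and "discr P > 0"
    and "T > 0"
    and "discr Q \<ge> T powr (3/2) * discr P"
    and "\<forall>t\<in>I. T * poly P t \<ge> poly Q t"
  shows "convex_on I (\<lambda>t. sqrt (poly P t) - sqrt (poly Q t))"
proof (rule f''_ge0_imp_convex)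
  show "convex I"
    using \<open>is_interval I\<close> by (rule is_interval_convex)
  fix t assume "t \<in> I"
  then have P: "poly P t > 0" and Q: "poly Q t > 0" and PQ: "poly Q t \<le> T * poly P t"
    using assms(4,5,9) by auto
  show "((\<lambda>t. sqrt (poly P t) - sqrt (poly Q t)) has_real_derivative
      poly (pderiv P) t / (2 * sqrt (poly P t)) - poly (pderiv Q) t / (2 * sqrt (poly Q t))) (at t)"
    using P Q by (intro DERIV_diff has_real_derivative_sqrt_poly)
  show "((\<lambda>t. poly (pderiv P) t / (2 * sqrt (poly P t)) - poly (pderiv Q) t / (2 * sqrt (poly Q t)))
      has_real_derivative - discr P / poly P t powr (3/2) - - discr Q / poly Q t powr (3/2)) (at t)"
    using assms(1,2) P Q by (intro DERIV_diff has_real_derivative_pderiv_div_sqrt_poly)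
  have "discr P / poly P t powr (3/2) \<le> discr Q / poly Q t powr (3/2)"
    using assms(6-8) Q PQ by (intro divide_powr_three_halves_mono) auto
  then show "- discr P / poly P t powr (3/2) - - discr Q / poly Q t powr (3/2) \<ge> 0"
    by simp
qed

end
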